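(* Let $x,y$ be two distinct points of the upper half plane $\mathbb{H}^2=\{z\in\mathbb{C}:\operatorname{Im}z>0\}$. Then the hyperbolic midpoint of the hyperbolic geodesic segment joining $x$ and $y$ is constructible by ruler and compass from the points $0,1,x,y$.
   Context: The hyperbolic distance $\rho$ on $\mathbb{H}^2$ is given by $\cosh\rho(x,y)=1+\frac{|x-y|^2}{2\,\operatorname{Im}x\,\operatorname{Im}y}$. The hyperbolic geodesic segment $J[x,y]$ is the arc joining $x$ and $y$ of the circle orthogonal to the real axis (or the vertical line, if $\operatorname{Re}x=\operatorname{Re}y$) containing $x,y$; its hyperbolic midpoint is the unique $z\in J[x,y]$ with $\rho(x,z)=\rho(z,y)$. A point is constructible by ruler and compass from a finite set $S\subset\mathbb{C}$ if it belongs to the smallest set $C\supseteq S$ closed under adding intersection points of lines through two distinct points of $C$ and circles with centre in $C$ passing through a point of $C$ (the real axis $\partial\mathbb{H}^2$ is the line through $0$ and $1$). *)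

theory Defs
  imports "HOL-Analysis.Analysis"
begin

definition hdist :: "complex \<Rightarrow> complex \<Rightarrow> real" where
  "hdist x y = arcosh (1 + (cmod (x - y))\<^sup>2 / (2 * Im x * Im y))"

definition geodesic_segment :: "complex \<Rightarrow> complex \<Rightarrow> complex set" where
  "geodesic_segment x y =
     (if Re x = Re y
      then {z. Re z = Re x \<and> min (Im x) (Im y) \<le> Im z \<and> Im z \<le> max (Im x) (Im y)}
      else {z. \<exists>c::real. cmod (x - of_real c) = cmod (y - of_real c)
                 \<and> cmod (z - of_real c) = cmod (x - of_real c) \<and> Im z > 0
                 \<and> min (Re x) (Re y) \<le> Re z \<and> Re z \<le> max (Re x) (Re y)})"

definition hyp_midpoint :: "complex \<Rightarrow> complex \<Rightarrow> complex" where
  "hyp_midpoint x y = (THE z. z \<in> geodesic_segment x y \<and> hdist x z = hdist z y)"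

definition line_through :: "complex \<Rightarrow> complex \<Rightarrow> complex set" where
  "line_through p q = {p + of_real t * (q - p) | t. True}"

definition circle_through :: "complex \<Rightarrow> complex \<Rightarrow> complex set" where
  "circle_through c d = {z. cmod (z - c) = cmod (d - c)}"

inductive_set constructible :: "complex set \<Rightarrow> complex set" for S :: "complex set" where
  base: "z \<in> S \<Longrightarrow> z \<in> constructible S"
| line_line: "\<lbrakk>p \<in> constructible S; q \<in> constructible S; r \<in> constructible S;
    s \<in> constructible S; p \<noteq> q; r \<noteq> s; line_through p q \<noteq> line_through r s;
    z \<in> line_through p q; z \<in> line_through r s\<rbrakk> \<Longrightarrow> z \<in> constructible S"
| line_circle: "\<lbrakk>p \<in> constructible S; q \<in> constructible S; c \<in> constructible S;
    d \<in> constructible S; p \<noteq> q;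
    z \<in> line_through p q; z \<in> circle_through c d\<rbrakk> \<Longrightarrow> z \<in> constructible S"
| circle_circle: "\<lbrakk>c \<in> constructible S; d \<in> constructible S; c' \<in> constructible S;
    d' \<in> constructible S; circle_through c d \<noteq> circle_through c' d';
    z \<in> circle_through c d; z \<in> circle_through c' d'\<rbrakk> \<Longrightarrow> z \<in> constructible S"

end

theory Submission
  imports Defs
begin

text \<open>Under \<open>z \<mapsto> (Re z, |z|\<^sup>2)\<close> both the geodesic through \<open>x, y\<close> (a vertical line or a
  circle centred on the real axis) and the locus \<open>\<rho>(x,z) = \<rho>(z,y)\<close>, which reads
  \<open>Im y |z - x|\<^sup>2 = Im x |z - y|\<^sup>2\<close>, become straight lines. Their intersection is the image of
  the weighted mean of \<open>x\<close> and \<open>y\<close> with weights \<open>Im y\<close> and \<open>Im x\<close>. Hence the midpoint has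
  rational \<open>Re\<close> and \<open>|\<cdot>|\<^sup>2\<close> in terms of the data, and its imaginary part is a square root
  of such a quantity; field operations and square roots of constructible reals are
  constructible.\<close>

lemma mem_line_through: "z \<in> line_through p q \<longleftrightarrow> (\<exists>t. z = p + of_real t * (q - p))"
  by (auto simp: line_through_def)

lemma mem_circle_through: "z \<in> circle_through c d \<longleftrightarrow> cmod (z - c) = cmod (d - c)"
  by (simp add: circle_through_def)

lemma circle_through_neq:
  assumes "c \<noteq> c'"
  shows "circle_through c d \<noteq> circle_through c' d'"
proof
  assume eq: "circle_through c d = circle_through c' d'"
  define r where "r = cmod (d - c)"
  have on_c': "cmod (z - c') = cmod (d' - c')" if "cmod (z - c) = r" for z
    using that eq by (auto simp: circle_through_def r_def)
  show False
  proof (cases "r = 0")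
    case True
    \<comment> \<open>The first circle is \<open>{c}\<close>, but the second one also contains the
      reflection \<open>2c' - c\<close> of \<open>c\<close>.\<close>
    have "cmod ((2 * c' - c) - c') = cmod (d' - c')"
      using on_c'[of c] True by (simp add: norm_minus_commute algebra_simps)
    then have "2 * c' - c \<in> circle_through c d"
      using eq by (simp add: mem_circle_through)
    then show False using True assms by (simp add: mem_circle_through r_def)
  next
    case False
    define w where "w = c - c'"
    have "cmod (w + u) = cmod (w - u)" if "cmod u = r" for u
      using on_c'[of "c + u"] on_c'[of "c - u"] that by (simp add: w_def algebra_simps)
    then have "(cmod (w + of_real r))^2 = (cmod (w - of_real r))^2"
      "(cmod (w + \<i> * of_real r))^2 = (cmod (w - \<i> * of_real r))^2"
      by (simp_all add: norm_mult r_def)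
    then have "Re w * r = 0" "Im w * r = 0"
      unfolding cmod_power2 by (simp_all add: power2_eq_square algebra_simps)
    then show False using False assms by (simp add: w_def complex_eq_iff)
  qed
qed

definition primitive_sixth_root :: complex where
  "primitive_sixth_root = Complex (1/2) (sqrt 3 / 2)"

lemma norm_primitive_sixth_root:
  "cmod primitive_sixth_root = 1" "cmod (primitive_sixth_root - 1) = 1"
  "cmod (cnj primitive_sixth_root) = 1" "cmod (cnj primitive_sixth_root - 1) = 1"
  by (simp_all add: primitive_sixth_root_def cmod_def power_divide)

context
  fixes S :: "complex set"
  assumes zero_in: "0 \<in> S" and one_in: "1 \<in> S"
begin

lemma constructible_0: "0 \<in> constructible S"
  by (rule base) (rule zero_in)

lemma constructible_1: "1 \<in> constructible S"
  by (rule base) (rule one_in)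

lemma constructible_equilateral_apex:
  assumes p: "p \<in> constructible S" and q: "q \<in> constructible S"
    and w: "cmod w = 1" "cmod (w - 1) = 1"
  shows "p + (q - p) * w \<in> constructible S"
proof (cases "p = q")
  case True
  then show ?thesis using p by simp
next
  case False
  show ?thesis
  proof (rule circle_circle[OF p q q p])
    show "circle_through p q \<noteq> circle_through q p"
      using False by (rule circle_through_neq)
    show "p + (q - p) * w \<in> circle_through p q"
      using w by (simp add: mem_circle_through norm_mult)
    have "p + (q - p) * w - q = (q - p) * (w - 1)" by (simp add: algebra_simps)
    then show "p + (q - p) * w \<in> circle_through q p"
      using w by (simp add: mem_circle_through norm_mult norm_minus_commute)
  qed
qed

lemma constructible_midpoint:
  assumes p: "p \<in> constructible S" and q: "q \<in> constructible S"
  shows "(p + q) / 2 \<in> constructible S"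
proof (cases "p = q")
  case True
  then show ?thesis using p by simp
next
  case False
  \<comment> \<open>The midpoint lies on the line through the two apices of the equilateral triangles on \<open>pq\<close>.\<close>
  define w1 where "w1 = p + (q - p) * primitive_sixth_root"
  define w2 where "w2 = p + (q - p) * cnj primitive_sixth_root"
  have w1: "w1 \<in> constructible S" and w2: "w2 \<in> constructible S"
    unfolding w1_def w2_def using constructible_equilateral_apex[OF p q] norm_primitive_sixth_root
    by simp_all
  have "w2 - w1 = (q - p) * (- \<i> * of_real (sqrt 3))"
    by (simp add: w1_def w2_def primitive_sixth_root_def algebra_simps complex_eq_iff)
  then have w12: "w1 \<noteq> w2" using False by auto
  have "w1 \<notin> line_through p q"
  proof
    assume "w1 \<in> line_through p q"
    then obtain t where "w1 = p + of_real t * (q - p)"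
      by (auto simp: mem_line_through)
    then have "(q - p) * (primitive_sixth_root - of_real t) = 0"
      by (simp add: w1_def algebra_simps)
    then have "primitive_sixth_root = of_real t" using False by simp
    then show False by (simp add: primitive_sixth_root_def complex_eq_iff)
  qed
  moreover have "w1 \<in> line_through w1 w2"
    by (simp add: mem_line_through exI[of _ 0])
  ultimately have "line_through p q \<noteq> line_through w1 w2" by auto
  then show ?thesis
  proof (rule line_line[OF p q w1 w2 False w12])
    show "(p + q) / 2 \<in> line_through p q"
      unfolding mem_line_through by (rule exI[of _ "1/2"]) (simp add: field_simps)
    have "(p + q) / 2 = w1 + of_real (1/2) * (w2 - w1)"
      by (simp add: w1_def w2_def primitive_sixth_root_def complex_eq_iff field_simps)
    then show "(p + q) / 2 \<in> line_through w1 w2"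
      unfolding mem_line_through by (rule exI)
  qed
qed

lemma constructible_reflection:
  assumes m: "m \<in> constructible S" and r: "r \<in> constructible S"
  shows "2 * m - r \<in> constructible S"
proof (cases "r = m")
  case True
  then show ?thesis using m by simp
next
  case False
  show ?thesis
  proof (rule line_circle[OF r m m r False])
    show "2 * m - r \<in> line_through r m"
      unfolding mem_line_through by (rule exI[of _ 2]) (simp add: algebra_simps)
    show "2 * m - r \<in> circle_through m r"
      by (simp add: mem_circle_through norm_minus_commute)
  qed
qed

lemma constructible_add:
  assumes "p \<in> constructible S" "q \<in> constructible S"
  shows "p + q \<in> constructible S"
proof -
  have "p + q = 2 * ((p + q) / 2) - 0" by simp
  also have "\<dots> \<in> constructible S"
    by (rule constructible_reflection[OF constructible_midpoint[OF assms] constructible_0])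
  finally show ?thesis .
qed

lemma constructible_uminus: "p \<in> constructible S \<Longrightarrow> - p \<in> constructible S"
  using constructible_reflection[OF constructible_0, of p] by simp

lemma constructible_diff:
  "p \<in> constructible S \<Longrightarrow> q \<in> constructible S \<Longrightarrow> p - q \<in> constructible S"
  using constructible_add[OF _ constructible_uminus, of p q] by simp

lemma constructible_cnj:
  assumes x: "x \<in> constructible S"
  shows "cnj x \<in> constructible S"
proof (rule circle_circle[OF constructible_0 x constructible_1 x])
  show "circle_through 0 x \<noteq> circle_through 1 x"
    by (rule circle_through_neq) simp
  show "cnj x \<in> circle_through 0 x"
    by (simp add: mem_circle_through)
  have "cmod (cnj x - 1) = cmod (x - 1)"
    by (metis complex_cnj_diff complex_cnj_one complex_mod_cnj)
  then show "cnj x \<in> circle_through 1 x"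
    by (simp add: mem_circle_through)
qed

lemma constructible_ii: "\<i> \<in> constructible S"
proof -
  define d where "d = primitive_sixth_root - 1/2"
  have dK: "d \<in> constructible S"
    unfolding d_def
    using constructible_diff[OF constructible_equilateral_apex[OF constructible_0 constructible_1]
        constructible_midpoint[OF constructible_0 constructible_1]]
      norm_primitive_sixth_root
    by simp
  have d: "d = \<i> * of_real (sqrt 3 / 2)"
    by (simp add: d_def primitive_sixth_root_def complex_eq_iff)
  show ?thesis
  proof (rule line_circle[OF constructible_0 dK constructible_0 constructible_1])
    show "0 \<noteq> d" by (simp add: d)
    have "\<i> = 0 + of_real (2 / sqrt 3) * (d - 0)" by (simp add: d)
    then show "\<i> \<in> line_through 0 d" unfolding mem_line_through by (rule exI)
    show "\<i> \<in> circle_through 0 1" by (simp add: mem_circle_through)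
  qed
qed

lemma constructible_ii_times_of_real_iff:
  "\<i> * of_real t \<in> constructible S \<longleftrightarrow> of_real t \<in> constructible S"
proof
  assume t: "\<i> * of_real t \<in> constructible S"
  show "of_real t \<in> constructible S"
  proof (rule line_circle[OF constructible_0 constructible_1 constructible_0 t])
    show "of_real t \<in> line_through 0 1" by (auto simp: mem_line_through)
  qed (simp_all add: mem_circle_through norm_mult)
next
  assume t: "of_real t \<in> constructible S"
  show "\<i> * of_real t \<in> constructible S"
  proof (rule line_circle[OF constructible_0 constructible_ii constructible_0 t])
    show "\<i> * of_real t \<in> line_through 0 \<i>" by (auto simp: mem_line_through mult.commute)
  qed (simp_all add: mem_circle_through norm_mult)
qed

lemma constructible_Re: "x \<in> constructible S \<Longrightarrow> of_real (Re x) \<in> constructible S"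
  using constructible_midpoint[of x "cnj x"] constructible_cnj by (simp add: complex_add_cnj)

lemma constructible_Im:
  assumes "x \<in> constructible S"
  shows "of_real (Im x) \<in> constructible S"
proof -
  have "\<i> * of_real (Im x) = (x + - cnj x) / 2" by (simp add: complex_eq_iff)
  also have "\<dots> \<in> constructible S"
    by (rule constructible_midpoint[OF assms constructible_uminus[OF constructible_cnj[OF assms]]])
  finally show ?thesis by (simp add: constructible_ii_times_of_real_iff)
qed

lemma constructible_Complex:
  "of_real a \<in> constructible S \<Longrightarrow> of_real b \<in> constructible S \<Longrightarrow> Complex a b \<in> constructible S"
  using constructible_add[of "of_real a" "\<i> * of_real b"] constructible_ii_times_of_real_iff
  by (simp add: Complex_eq)

lemma constructible_cmod: "x \<in> constructible S \<Longrightarrow> of_real (cmod x) \<in> constructible S"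
  by (rule line_circle[OF constructible_0 constructible_1 constructible_0])
    (auto simp: mem_line_through mem_circle_through)

lemma constructible_of_real_ratio:
  assumes a: "of_real a \<in> constructible S" and p: "of_real p \<in> constructible S"
    and q: "of_real q \<in> constructible S" and "p \<noteq> 0"
  shows "of_real (a * q / p) \<in> constructible S"
proof (cases "a = 0")
  case True
  then show ?thesis using constructible_0 by simp
next
  case False
  \<comment> \<open>Intercept theorem: meet the line through \<open>0\<close> and \<open>p + \<i>q\<close> with the vertical line \<open>Re z = a\<close>.\<close>
  have P: "Complex p q \<in> constructible S" and V: "Complex a 1 \<in> constructible S"
    using constructible_Complex a p q constructible_1 by simp_all
  have "Complex a (a * q / p) \<in> constructible S"
  proof (rule line_line[OF constructible_0 P a V])
    show "0 \<noteq> Complex p q" "complex_of_real a \<noteq> Complex a 1"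
      using \<open>p \<noteq> 0\<close> by (simp_all add: complex_eq_iff)
    have "0 \<in> line_through 0 (Complex p q)"
      by (auto simp: mem_line_through)
    moreover have "0 \<notin> line_through (of_real a) (Complex a 1)"
      using False by (auto simp: mem_line_through complex_eq_iff)
    ultimately show "line_through 0 (Complex p q) \<noteq> line_through (of_real a) (Complex a 1)"
      by auto
    have "Complex a (a * q / p) = 0 + of_real (a / p) * (Complex p q - 0)"
      using \<open>p \<noteq> 0\<close> by (simp add: complex_eq_iff)
    then show "Complex a (a * q / p) \<in> line_through 0 (Complex p q)"
      unfolding mem_line_through by (rule exI)
    have "Complex a (a * q / p) = of_real a + of_real (a * q / p) * (Complex a 1 - of_real a)"
      by (simp add: complex_eq_iff)
    then show "Complex a (a * q / p) \<in> line_through (of_real a) (Complex a 1)"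
      unfolding mem_line_through by (rule exI)
  qed
  then show ?thesis using constructible_Im by fastforce
qed

lemma constructible_of_real_add:
  "of_real a \<in> constructible S \<Longrightarrow> of_real b \<in> constructible S \<Longrightarrow> of_real (a + b) \<in> constructible S"
  by (simp add: constructible_add)

lemma constructible_of_real_diff:
  "of_real a \<in> constructible S \<Longrightarrow> of_real b \<in> constructible S \<Longrightarrow> of_real (a - b) \<in> constructible S"
  by (simp add: constructible_diff)

lemma constructible_of_real_mult:
  "of_real a \<in> constructible S \<Longrightarrow> of_real b \<in> constructible S \<Longrightarrow> of_real (a * b) \<in> constructible S"
  using constructible_of_real_ratio[of a 1 b] constructible_1 by simp

lemma constructible_of_real_divide:
  "of_real a \<in> constructible S \<Longrightarrow> of_real b \<in> constructible S \<Longrightarrow> of_real (a / b) \<in> constructible S"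
  using constructible_of_real_ratio[of a b 1] constructible_0 constructible_1 by (cases "b = 0") simp_all

lemma constructible_of_real_sqrt_nonneg:
  assumes t: "of_real t \<in> constructible S" and "t \<ge> 0"
  shows "of_real (sqrt t) \<in> constructible S"
proof -
  \<comment> \<open>The circle on the diameter from \<open>-1\<close> to \<open>t\<close> meets the imaginary axis at \<open>\<i> sqrt t\<close>.\<close>
  have c: "of_real ((t - 1) / 2) \<in> constructible S"
    using constructible_midpoint[OF constructible_diff[OF t constructible_1] constructible_0] by simp
  have "\<i> * of_real (sqrt t) \<in> constructible S"
  proof (rule line_circle[OF constructible_0 constructible_ii c t])
    show "\<i> * of_real (sqrt t) \<in> line_through 0 \<i>"
      by (auto simp: mem_line_through mult.commute)
    have "(cmod (\<i> * of_real (sqrt t) - of_real ((t - 1) / 2)))^2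
        = (cmod (of_real t - of_real ((t - 1) / 2)))^2"
      unfolding cmod_power2 using \<open>t \<ge> 0\<close> by (simp add: power2_eq_square field_simps)
    then show "\<i> * of_real (sqrt t) \<in> circle_through (of_real ((t - 1) / 2)) (of_real t)"
      by (simp add: mem_circle_through power2_eq_iff_nonneg)
  qed simp
  then show ?thesis by (simp add: constructible_ii_times_of_real_iff)
qed

lemma constructible_of_real_sqrt:
  "of_real t \<in> constructible S \<Longrightarrow> of_real (sqrt t) \<in> constructible S"
  using constructible_of_real_sqrt_nonneg[of t] constructible_of_real_sqrt_nonneg[of "- t"]
    constructible_uminus
  by (cases "t \<ge> 0") (fastforce simp: real_sqrt_minus)+

end

definition im_weighted_mean :: "(complex \<Rightarrow> real) \<Rightarrow> complex \<Rightarrow> complex \<Rightarrow> real" where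
  "im_weighted_mean f x y = (Im y * f x + Im x * f y) / (Im x + Im y)"

lemma im_weighted_mean_affine:
  assumes "Im x + Im y \<noteq> 0"
  shows "im_weighted_mean (\<lambda>z. A * f z + B * g z + C) x y
       = A * im_weighted_mean f x y + B * im_weighted_mean g x y + C"
proof -
  obtain s where s: "Im x + Im y = s" "s \<noteq> 0" using assms by blast
  show ?thesis unfolding im_weighted_mean_def s(1)
    using s by (simp add: field_simps) (simp add: s(1)[symmetric] algebra_simps)
qed

lemma im_weighted_mean_between:
  assumes "Im x > 0" "Im y > 0"
  shows "min (f x) (f y) \<le> im_weighted_mean f x y \<and> im_weighted_mean f x y \<le> max (f x) (f y)"
proof -
  obtain s where s: "Im x + Im y = s" "s > 0" using assms by simp
  have "im_weighted_mean f x y - f x = Im x * (f y - f x) / s"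
   and "im_weighted_mean f x y - f y = Im y * (f x - f y) / s"
    unfolding im_weighted_mean_def s(1) using s
    by (simp_all add: field_simps) (simp_all add: s(1)[symmetric] algebra_simps)
  moreover have "0 \<le> Im x * (f y - f x) / s \<longleftrightarrow> f x \<le> f y"
    and "0 \<le> Im y * (f x - f y) / s \<longleftrightarrow> f y \<le> f x"
    using assms s by (simp_all add: zero_le_divide_iff zero_le_mult_iff)
  ultimately show ?thesis unfolding min_def max_def by auto
qed

lemma power2_im_weighted_mean_le:
  assumes "Im x > 0" "Im y > 0"
  shows "(im_weighted_mean f x y)^2 \<le> im_weighted_mean (\<lambda>z. (f z)^2) x y"
proof -
  obtain s where s: "Im x + Im y = s" "s > 0" using assms by simp
  have "im_weighted_mean (\<lambda>z. (f z)^2) x y - (im_weighted_mean f x y)^2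
      = Im x * Im y * (f x - f y)^2 / s^2"
    unfolding im_weighted_mean_def s(1) using s
    by (simp add: field_simps) (simp add: s(1)[symmetric] power2_eq_square power4_eq_xxxx algebra_simps)
  also have "\<dots> \<ge> 0" using assms by simp
  finally show ?thesis by simp
qed

definition hyp_midpoint_closed_form :: "complex \<Rightarrow> complex \<Rightarrow> complex" where
  "hyp_midpoint_closed_form x y =
     Complex (im_weighted_mean Re x y)
       (sqrt (im_weighted_mean (\<lambda>z. (cmod z)^2) x y - (im_weighted_mean Re x y)^2))"

lemma power2_im_weighted_mean_Re_less:
  assumes "Im x > 0" "Im y > 0"
  shows "(im_weighted_mean Re x y)^2 < im_weighted_mean (\<lambda>z. (cmod z)^2) x y"
proof -
  have "im_weighted_mean (\<lambda>z. (cmod z)^2) x y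
      = im_weighted_mean (\<lambda>z. (Re z)^2) x y + im_weighted_mean (\<lambda>z. (Im z)^2) x y"
    using im_weighted_mean_affine[of x y 1 "\<lambda>z. (Re z)^2" 1 "\<lambda>z. (Im z)^2" 0] assms
    by (simp add: cmod_power2)
  moreover have "min ((Im x)^2) ((Im y)^2) \<le> im_weighted_mean (\<lambda>z. (Im z)^2) x y"
    using im_weighted_mean_between[OF assms, of "\<lambda>z. (Im z)^2"] by simp
  moreover have "min ((Im x)^2) ((Im y)^2) > 0" using assms by simp
  ultimately show ?thesis using power2_im_weighted_mean_le[OF assms, of Re] by linarith
qed

lemma Im_hyp_midpoint_closed_form_pos:
  assumes "Im x > 0" "Im y > 0"
  shows "Im (hyp_midpoint_closed_form x y) > 0"
  using power2_im_weighted_mean_Re_less[OF assms] by (simp add: hyp_midpoint_closed_form_def)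

lemma affine_hyp_midpoint_closed_form:
  assumes "Im x > 0" "Im y > 0"
  shows "A * Re (hyp_midpoint_closed_form x y) + B * (cmod (hyp_midpoint_closed_form x y))^2 + C
       = im_weighted_mean (\<lambda>z. A * Re z + B * (cmod z)^2 + C) x y"
proof -
  have "(cmod (hyp_midpoint_closed_form x y))^2 = im_weighted_mean (\<lambda>z. (cmod z)^2) x y"
    using power2_im_weighted_mean_Re_less[OF assms]
    by (simp add: hyp_midpoint_closed_form_def cmod_power2)
  then show ?thesis using assms
    by (simp add: im_weighted_mean_affine hyp_midpoint_closed_form_def)
qed

lemma hdist_eq_iff:
  assumes "Im x > 0" "Im y > 0" "Im z > 0"
  shows "hdist x z = hdist z y \<longleftrightarrow> Im y * (cmod (z - x))^2 = Im x * (cmod (z - y))^2"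
proof -
  have "hdist x z = hdist z y \<longleftrightarrow>
      (cmod (z - x))^2 / (2 * Im x * Im z) = (cmod (z - y))^2 / (2 * Im z * Im y)"
    unfolding hdist_def using assms
    by (smt (verit, best) cosh_arcosh_real divide_nonneg_pos norm_minus_commute
        mult_pos_pos zero_le_power2)
  also have "\<dots> \<longleftrightarrow> Im y * (cmod (z - x))^2 = Im x * (cmod (z - y))^2"
    using assms by (simp add: field_simps)
  finally show ?thesis .
qed

lemma weighted_power2_dist_diff:
  "Im y * (cmod (z - x))^2 - Im x * (cmod (z - y))^2
     = 2 * (Im x * Re y - Im y * Re x) * Re z + (Im y - Im x) * (cmod z)^2
       + (Im y * (cmod x)^2 - Im x * (cmod y)^2)"
  unfolding cmod_power2 by (simp add: power2_eq_square algebra_simps)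

lemma hdist_hyp_midpoint_closed_form:
  assumes "Im x > 0" "Im y > 0"
  shows "hdist x (hyp_midpoint_closed_form x y) = hdist (hyp_midpoint_closed_form x y) y"
proof -
  define m where "m = hyp_midpoint_closed_form x y"
  have "Im y * (cmod (m - x))^2 - Im x * (cmod (m - y))^2
      = im_weighted_mean (\<lambda>z. Im y * (cmod (z - x))^2 - Im x * (cmod (z - y))^2) x y"
    unfolding weighted_power2_dist_diff m_def by (rule affine_hyp_midpoint_closed_form[OF assms])
  also have "\<dots> = 0"
    by (simp add: im_weighted_mean_def norm_minus_commute)
  finally show ?thesis
    using hdist_eq_iff[OF assms Im_hyp_midpoint_closed_form_pos[OF assms]] by (simp add: m_def)
qed

lemma power2_norm_diff_of_real:
  "(cmod (z - of_real c))^2 = (cmod z)^2 - 2 * c * Re z + c^2"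
  unfolding cmod_power2 by (simp add: power2_eq_square algebra_simps)

lemma hyp_midpoint_closed_form_in_geodesic_segment:
  assumes "Im x > 0" "Im y > 0"
  shows "hyp_midpoint_closed_form x y \<in> geodesic_segment x y"
proof (cases "Re x = Re y")
  case True
  define m where "m = hyp_midpoint_closed_form x y"
  have Re_m: "Re m = Re x"
    using True assms by (simp add: m_def hyp_midpoint_closed_form_def im_weighted_mean_def field_simps)
  have "(Im m)^2 = (cmod m)^2 - (Re x)^2"
    using Re_m by (simp add: cmod_power2)
  also have "\<dots> = im_weighted_mean (\<lambda>z. (cmod z)^2 - (Re x)^2) x y"
    using affine_hyp_midpoint_closed_form[OF assms, of 0 1 "- ((Re x)^2)"] by (simp add: m_def)
  also have "\<dots> = im_weighted_mean (\<lambda>z. (Im z)^2) x y"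
    using True by (simp add: im_weighted_mean_def cmod_power2)
  finally have "min ((Im x)^2) ((Im y)^2) \<le> (Im m)^2 \<and> (Im m)^2 \<le> max ((Im x)^2) ((Im y)^2)"
    using im_weighted_mean_between[OF assms, of "\<lambda>z. (Im z)^2"] by simp
  then have "min (Im x) (Im y) \<le> Im m \<and> Im m \<le> max (Im x) (Im y)"
    using assms Im_hyp_midpoint_closed_form_pos[OF assms]
    by (auto simp: min_def max_def m_def split: if_splits)
  then show ?thesis using True Re_m by (simp add: geodesic_segment_def m_def)
next
  case False
  define c where "c = ((cmod y)^2 - (cmod x)^2) / (2 * (Re y - Re x))"
  have c_eq: "(cmod x)^2 - 2 * c * Re x = (cmod y)^2 - 2 * c * Re y"
    using False by (simp add: c_def field_simps)
  define m where "m = hyp_midpoint_closed_form x y"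
  have "(cmod (m - of_real c))^2 - (cmod (x - of_real c))^2
      = (- 2 * c) * Re m + 1 * (cmod m)^2 + (- ((cmod x)^2 - 2 * c * Re x))"
    by (simp add: power2_norm_diff_of_real)
  also have "\<dots> = im_weighted_mean
      (\<lambda>z. (- 2 * c) * Re z + 1 * (cmod z)^2 + (- ((cmod x)^2 - 2 * c * Re x))) x y"
    unfolding m_def by (rule affine_hyp_midpoint_closed_form[OF assms])
  also have "\<dots> = 0"
    by (simp add: im_weighted_mean_def c_eq)
  finally have "cmod (m - of_real c) = cmod (x - of_real c)"
    by (simp add: power2_eq_iff_nonneg)
  moreover have "cmod (x - of_real c) = cmod (y - of_real c)"
    using c_eq by (simp add: power2_eq_iff_nonneg[symmetric] power2_norm_diff_of_real)
  ultimately show ?thesis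
    using False im_weighted_mean_between[OF assms, of Re] Im_hyp_midpoint_closed_form_pos[OF assms]
    by (auto simp: geodesic_segment_def hyp_midpoint_closed_form_def m_def)
qed

lemma geodesic_segment_in_upper_half_plane:
  assumes "Im x > 0" "Im y > 0" "z \<in> geodesic_segment x y"
  shows "Im z > 0"
  using assms by (auto simp: geodesic_segment_def split: if_splits)

lemma geodesic_segment_on_linear_locus:
  "\<exists>A B C. (A, B) \<noteq> (0, 0) \<and>
     (\<forall>z \<in> insert x (geodesic_segment x y). A * Re z + B * (cmod z)^2 = (C::real))"
proof (cases "Re x = Re y")
  case True
  then show ?thesis by (intro exI[of _ 1] exI[of _ 0] exI[of _ "Re x"]) (simp add: geodesic_segment_def)
next
  case False
  define c where "c = ((cmod y)^2 - (cmod x)^2) / (2 * (Re y - Re x))"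
  have "(cmod z)^2 - 2 * c * Re z = (cmod x)^2 - 2 * c * Re x"
    if z: "z \<in> geodesic_segment x y" for z
  proof -
    obtain c' where c': "cmod (x - of_real c') = cmod (y - of_real c')"
      "cmod (z - of_real c') = cmod (x - of_real c')"
      using z unfolding geodesic_segment_def if_not_P[OF False] by blast
    have "c' = c"
      using arg_cong[OF c'(1), of "\<lambda>t. t^2"] False
      by (simp add: power2_norm_diff_of_real c_def field_simps)
    then show ?thesis
      using arg_cong[OF c'(2), of "\<lambda>t. t^2"] by (simp add: power2_norm_diff_of_real)
  qed
  then show ?thesis
    by (intro exI[of _ "- 2 * c"] exI[of _ 1] exI[of _ "(cmod x)^2 - 2 * c * Re x"]) auto
qed

lemma two_linear_equations_unique_solution:
  fixes A B C A' B' C' :: real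
  assumes "(A, B) \<noteq> (0, 0)"
    and "A * p + B * q = C" "A * p' + B * q' = C" "A * p0 + B * q0 = C"
    and "A' * p + B' * q = C'" "A' * p' + B' * q' = C'" "A' * p0 + B' * q0 \<noteq> C'"
  shows "p = p' \<and> q = q'"
proof (rule ccontr)
  assume "\<not> (p = p' \<and> q = q')"
  then have d: "(p' - p, q' - q) \<noteq> (0, 0)" by auto
  have rot: "(a * e1 + b * e2) * d1 - (a * d1 + b * d2) * e1 = b * (d1 * e2 - d2 * e1)"
    "(a * e1 + b * e2) * d2 - (a * d1 + b * d2) * e2 = - a * (d1 * e2 - d2 * e1)"
    for a b d1 d2 e1 e2 :: real
    by (simp_all add: algebra_simps)
  have "A * (p' - p) + B * (q' - q) = 0" "A * (p0 - p) + B * (q0 - q) = 0"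
    using assms(2-4) by (simp_all add: algebra_simps)
  then have "(p' - p) * (q0 - q) - (q' - q) * (p0 - p) = 0"
    using rot[of A "p0 - p" B "q0 - q" "p' - p" "q' - q"] assms(1) by auto
  moreover have "A' * (p' - p) + B' * (q' - q) = 0"
    using assms(5,6) by (simp add: algebra_simps)
  ultimately have "(A' * (p0 - p) + B' * (q0 - q)) * (p' - p) = 0"
    "(A' * (p0 - p) + B' * (q0 - q)) * (q' - q) = 0"
    using rot[of A' "p0 - p" B' "q0 - q" "p' - p" "q' - q"] by auto
  moreover have "A' * (p0 - p) + B' * (q0 - q) \<noteq> 0"
    using assms(5,7) by (simp add: algebra_simps)
  ultimately show False using d by simp
qed

lemma hyp_equidistant_point_of_geodesic_segment_unique:
  assumes "Im x > 0" "Im y > 0" "x \<noteq> y"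
    and "z \<in> geodesic_segment x y" "hdist x z = hdist z y"
    and "z' \<in> geodesic_segment x y" "hdist x z' = hdist z' y"
  shows "z = z'"
proof -
  obtain A B C where AB: "(A, B) \<noteq> (0, 0)"
    and geod: "\<forall>w \<in> insert x (geodesic_segment x y). A * Re w + B * (cmod w)^2 = C"
    using geodesic_segment_on_linear_locus by blast
  define A' where "A' = 2 * (Im x * Re y - Im y * Re x)"
  define B' where "B' = Im y - Im x"
  define C' where "C' = Im x * (cmod y)^2 - Im y * (cmod x)^2"
  have equi: "A' * Re w + B' * (cmod w)^2 - C' = Im y * (cmod (w - x))^2 - Im x * (cmod (w - y))^2"
    for w
    unfolding weighted_power2_dist_diff A'_def B'_def C'_def by simp
  have "Im x * (cmod (x - y))^2 > 0"
    using assms(1,3) by simp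
  then have "A' * Re x + B' * (cmod x)^2 \<noteq> C'"
    using equi[of x] by simp
  moreover have "A' * Re w + B' * (cmod w)^2 = C'"
    if "w \<in> geodesic_segment x y" "hdist x w = hdist w y" for w
    using that equi[of w] geodesic_segment_in_upper_half_plane[OF assms(1,2)]
      hdist_eq_iff[OF assms(1,2)] by simp
  ultimately have "Re z = Re z' \<and> (cmod z)^2 = (cmod z')^2"
    using two_linear_equations_unique_solution[OF AB, of "Re z" "(cmod z)^2" C "Re z'" "(cmod z')^2"
        "Re x" "(cmod x)^2" A' B' C'] geod assms(4-7) by blast
  then have "Re z = Re z'" "(Im z)^2 = (Im z')^2"
    by (auto simp: cmod_power2)
  moreover have "Im z > 0" "Im z' > 0"
    using assms geodesic_segment_in_upper_half_plane by blast+
  ultimately show ?thesis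
    by (simp add: complex_eq_iff power2_eq_iff_nonneg)
qed

lemma hyp_midpoint_eq_closed_form:
  assumes "Im x > 0" "Im y > 0" "x \<noteq> y"
  shows "hyp_midpoint x y = hyp_midpoint_closed_form x y"
proof -
  let ?m = "hyp_midpoint_closed_form x y"
  have "?m \<in> geodesic_segment x y" "hdist x ?m = hdist ?m y"
    using assms hyp_midpoint_closed_form_in_geodesic_segment hdist_hyp_midpoint_closed_form by blast+
  then show ?thesis
    unfolding hyp_midpoint_def
    using hyp_equidistant_point_of_geodesic_segment_unique[OF assms] by blast
qed

lemma constructible_hyp_midpoint_closed_form:
  assumes S: "0 \<in> S" "1 \<in> S" and x: "x \<in> constructible S" and y: "y \<in> constructible S"
  shows "hyp_midpoint_closed_form x y \<in> constructible S"
proof -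
  note add = constructible_of_real_add[OF S] and diff = constructible_of_real_diff[OF S]
    and mult = constructible_of_real_mult[OF S] and divide = constructible_of_real_divide[OF S]
  have mean: "of_real (im_weighted_mean f x y) \<in> constructible S"
    if "of_real (f x) \<in> constructible S" "of_real (f y) \<in> constructible S" for f
    unfolding im_weighted_mean_def
    by (rule divide add mult that constructible_Im[OF S x] constructible_Im[OF S y])+
  have "of_real ((cmod z)^2) \<in> constructible S" if "z \<in> constructible S" for z
    unfolding power2_eq_square by (rule mult constructible_cmod[OF S that])+
  then have sqnorm: "of_real (im_weighted_mean (\<lambda>z. (cmod z)^2) x y) \<in> constructible S"
    using mean x y by simp
  have re: "of_real (im_weighted_mean Re x y) \<in> constructible S"
    using mean constructible_Re[OF S x] constructible_Re[OF S y] by simp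
  show ?thesis
    unfolding hyp_midpoint_closed_form_def power2_eq_square[of "im_weighted_mean Re x y"]
    by (rule constructible_Complex[OF S] constructible_of_real_sqrt[OF S] diff mult sqnorm re)+
qed

theorem theorem1p1:
  fixes x y :: complex
  assumes "Im x > 0" and "Im y > 0" and "x \<noteq> y"
  shows "hyp_midpoint x y \<in> constructible {0, 1, x, y}"
  unfolding hyp_midpoint_eq_closed_form[OF assms]
  by (rule constructible_hyp_midpoint_closed_form) (simp_all add: constructible.base)

end
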